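(* In the category of pointed Frölicher spaces, let $A\subseteq X$ be a subspace containing the basepoint such that $(X,A)$ is an SNDR pair, let $i:A\hookrightarrow X$ be the inclusion and $p:X\to X/A$ the quotient map. Then the sequence $A\xrightarrow{i}X\xrightarrow{p}X/A$ is right exact: for every pointed Frölicher space $W$ the sequence of pointed sets $[X/A,W]\xrightarrow{p^*}[X,W]\xrightarrow{i^*}[A,W]$ is exact, i.e. $\operatorname{im}p^*=(i^* )^{-1}(\ast)$.
   Context: A Frölicher space is a triple $(X,\mathcal C_X,\mathcal F_X)$ with $\mathcal C_X\subseteq X^{\mathbb R}$, $\mathcal F_X\subseteq\mathbb R^X$, such that $\mathcal F_X=\{f\mid f\circ c\in C^\infty(\mathbb R,\mathbb R)\ \forall c\in\mathcal C_X\}$ and $\mathcal C_X=\{c\mid f\circ c\in C^\infty(\mathbb R,\mathbb R)\ \forall f\in\mathcal F_X\}$. Smooth maps: $g\circ\varphi\in\mathcal F_X$ for all $g\in\mathcal F_Y$. Subspaces carry the initial structure, products the structure generated by $f\circ\pi_i$, quotients the final structure. $I$ is $[0,1]$ with the subspace structure from $\mathbb R$; $\mathbf I$ is $[0,1]$ with the structure generated by those structure functions of $I$ that are constant on $[0,\epsilon)$ and on $(1-\epsilon,1]$ for some $0<\epsilon<1/4$. Pointed Frölicher spaces have a distinguished basepoint; maps preserve basepoints. For pointed $X,W$, $[X,W]$ is the set of classes of basepoint-preserving smooth maps modulo pointed smooth homotopy (smooth $H:I\times X\to W$ with $H(t,x_0)=w_0$ for all $t$), pointed by the class of the constant map; $g^*$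 denotes precomposition with $g$. FCIP: For a smooth $i:A\to X$ and a structure curve $x:\mathbb R\to X$ let $\Lambda(x,i)$ be the set of $s_*\in x^{-1}(i(A))$ that are limits of sequences $s_n\in x^{-1}(X\setminus i(A))$. A structure function $g$ on $\mathbf I\times X$ has the FCIP w.r.t. $i$ if $g\circ c$ is $C^\infty$ for every map $c=(t,x):\mathbb R\to[0,1]\times X$ with $x$ a structure curve and, for every $\epsilon>0$, $t$ $C^\infty$ on every open interval disjoint from $\bigcup_{s_*\in\Lambda(x,i)}[s_*-\epsilon,s_*+\epsilon]$; a map $g:\mathbf I\times X\to Z$ has the FCIP if $h\circ g$ does for all $h\in\mathcal F_Z$. SNDR pair: $(X,A)$ is an SNDR pair if there are a smooth $u:X\to\mathbf I$ with $u^{-1}(0)=A$ and a smooth $H:\mathbf I\times X\to X$ with the FCIP w.r.t. $i$, $H(0,x)=x$, $H(t,a)=a$ for $a\in A$, and $H(1,x)\in A$ whenever $u(x)<1$. *)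

theory Defs
  imports "HOL-Analysis.Analysis"
begin

definition Cinf_on :: "real set \<Rightarrow> (real \<Rightarrow> real) \<Rightarrow> bool" where
  "Cinf_on U f \<longleftrightarrow> (\<forall>n. \<forall>x\<in>U. ((deriv ^^ n) f) differentiable (at x))"

definition Cinf :: "(real \<Rightarrow> real) \<Rightarrow> bool" where
  "Cinf f \<longleftrightarrow> Cinf_on UNIV f"

record 'a frol =
  fcar :: "'a set"
  fcurv :: "(real \<Rightarrow> 'a) set"
  ffun :: "('a \<Rightarrow> real) set"

definition frolicher :: "'a frol \<Rightarrow> bool" where
  "frolicher X \<longleftrightarrow>
     ffun X = {f. \<forall>c\<in>fcurv X. Cinf (f \<circ> c)} \<and>
     fcurv X = {c. (\<forall>s. c s \<in> fcar X) \<and> (\<forall>f\<in>ffun X. Cinf (f \<circ> c))}"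

definition gen_by_funs :: "'a set \<Rightarrow> ('a \<Rightarrow> real) set \<Rightarrow> 'a frol" where
  "gen_by_funs S F0 =
     (let C = {c. (\<forall>s. c s \<in> S) \<and> (\<forall>f\<in>F0. Cinf (f \<circ> c))}
      in \<lparr>fcar = S, fcurv = C, ffun = {f. \<forall>c\<in>C. Cinf (f \<circ> c)}\<rparr>)"

definition gen_by_curves :: "'a set \<Rightarrow> (real \<Rightarrow> 'a) set \<Rightarrow> 'a frol" where
  "gen_by_curves S C0 =
     (let F = {f. \<forall>c\<in>C0. Cinf (f \<circ> c)}
      in \<lparr>fcar = S, fcurv = {c. (\<forall>s. c s \<in> S) \<and> (\<forall>f\<in>F. Cinf (f \<circ> c))}, ffun = F\<rparr>)"

definition smooth_map :: "'a frol \<Rightarrow> 'b frol \<Rightarrow> ('a \<Rightarrow> 'b) \<Rightarrow> bool" where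
  "smooth_map X Y \<phi> \<longleftrightarrow> (\<forall>x\<in>fcar X. \<phi> x \<in> fcar Y) \<and> (\<forall>g\<in>ffun Y. g \<circ> \<phi> \<in> ffun X)"

definition frol_subspace :: "'a frol \<Rightarrow> 'a set \<Rightarrow> 'a frol" where
  "frol_subspace X A = gen_by_funs A (ffun X)"

definition prod_frol :: "'a frol \<Rightarrow> 'b frol \<Rightarrow> ('a \<times> 'b) frol" where
  "prod_frol X Y = gen_by_funs (fcar X \<times> fcar Y)
      ({f \<circ> fst | f. f \<in> ffun X} \<union> {g \<circ> snd | g. g \<in> ffun Y})"

text \<open>Quotient X/A collapsing A to a point; the class of x is A if x is in A, else {x}.\<close>
definition collapse :: "'a set \<Rightarrow> 'a \<Rightarrow> 'a set" where
  "collapse A x = (if x \<in> A then A else {x})"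

definition quotient_frol :: "'a frol \<Rightarrow> 'a set \<Rightarrow> 'a set frol" where
  "quotient_frol X A = gen_by_curves (collapse A ` fcar X) {collapse A \<circ> c | c. c \<in> fcurv X}"

definition real_frol :: "real frol" where
  "real_frol = \<lparr>fcar = UNIV, fcurv = {c. Cinf c}, ffun = {f. Cinf f}\<rparr>"

definition unitI :: "real frol" where
  "unitI = frol_subspace real_frol {0..1}"

definition boldI :: "real frol" where
  "boldI = gen_by_funs {0..1}
     {f \<in> ffun unitI. \<exists>\<epsilon>. 0 < \<epsilon> \<and> \<epsilon> < 1/4 \<and>
         (\<forall>x. 0 \<le> x \<and> x < \<epsilon> \<longrightarrow> f x = f 0) \<and>
         (\<forall>x. 1 - \<epsilon> < x \<and> x \<le> 1 \<longrightarrow> f x = f 1)}"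

definition Lambda_set :: "'a frol \<Rightarrow> 'a set \<Rightarrow> (real \<Rightarrow> 'a) \<Rightarrow> real set" where
  "Lambda_set X A x = {s. x s \<in> A \<and>
      (\<exists>sn. (\<forall>n. x (sn n) \<in> fcar X - A) \<and> sn \<longlonglongrightarrow> s)}"

definition fcip_fun :: "'a frol \<Rightarrow> 'a set \<Rightarrow> (real \<times> 'a \<Rightarrow> real) \<Rightarrow> bool" where
  "fcip_fun X A g \<longleftrightarrow>
     (\<forall>t x. x \<in> fcurv X \<longrightarrow> (\<forall>s. t s \<in> {0..1}) \<longrightarrow>
        (\<forall>\<epsilon>>0. \<forall>a b. {a<..<b} \<inter> (\<Union>s\<in>Lambda_set X A x. {s-\<epsilon>..s+\<epsilon>}) = {}
               \<longrightarrow> Cinf_on {a<..<b} t) \<longrightarrow>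
        Cinf (g \<circ> (\<lambda>s. (t s, x s))))"

definition fcip_map :: "'a frol \<Rightarrow> 'a set \<Rightarrow> 'c frol \<Rightarrow> (real \<times> 'a \<Rightarrow> 'c) \<Rightarrow> bool" where
  "fcip_map X A Z g \<longleftrightarrow> (\<forall>h\<in>ffun Z. fcip_fun X A (h \<circ> g))"

definition SNDR :: "'a frol \<Rightarrow> 'a set \<Rightarrow> bool" where
  "SNDR X A \<longleftrightarrow> (\<exists>u H.
     smooth_map X boldI u \<and> {x\<in>fcar X. u x = 0} = A \<and>
     smooth_map (prod_frol boldI X) X H \<and> fcip_map X A X H \<and>
     (\<forall>x\<in>fcar X. H (0, x) = x) \<and>
     (\<forall>t\<in>{0..1}. \<forall>a\<in>A. H (t, a) = a) \<and>
     (\<forall>x\<in>fcar X. u x < 1 \<longrightarrow> H (1, x) \<in> A))"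

definition pmaps :: "'a frol \<Rightarrow> 'a \<Rightarrow> 'b frol \<Rightarrow> 'b \<Rightarrow> ('a \<Rightarrow> 'b) set" where
  "pmaps X x0 W w0 = {f. smooth_map X W f \<and> f x0 = w0}"

definition phomotopic :: "'a frol \<Rightarrow> 'a \<Rightarrow> 'b frol \<Rightarrow> 'b \<Rightarrow> ('a \<Rightarrow> 'b) \<Rightarrow> ('a \<Rightarrow> 'b) \<Rightarrow> bool" where
  "phomotopic X x0 W w0 f g \<longleftrightarrow> (\<exists>H. smooth_map (prod_frol unitI X) W H \<and>
      (\<forall>x\<in>fcar X. H (0, x) = f x \<and> H (1, x) = g x) \<and>
      (\<forall>t\<in>{0..1}. H (t, x0) = w0))"

definition htpy_rel :: "'a frol \<Rightarrow> 'a \<Rightarrow> 'b frol \<Rightarrow> 'b \<Rightarrow> ('a \<Rightarrow> 'b) \<Rightarrow> ('a \<Rightarrow> 'b) \<Rightarrow> bool" where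
  "htpy_rel X x0 W w0 = equivclp (\<lambda>f g. f \<in> pmaps X x0 W w0 \<and> g \<in> pmaps X x0 W w0 \<and>
                                         phomotopic X x0 W w0 f g)"

definition hcls :: "'a frol \<Rightarrow> 'a \<Rightarrow> 'b frol \<Rightarrow> 'b \<Rightarrow> ('a \<Rightarrow> 'b) \<Rightarrow> ('a \<Rightarrow> 'b) set" where
  "hcls X x0 W w0 f = {g \<in> pmaps X x0 W w0. htpy_rel X x0 W w0 f g}"

text \<open>The pointed set [X,W] (its basepoint is the class of the constant map).\<close>
definition htpy_set :: "'a frol \<Rightarrow> 'a \<Rightarrow> 'b frol \<Rightarrow> 'b \<Rightarrow> ('a \<Rightarrow> 'b) set set" where
  "htpy_set X x0 W w0 = hcls X x0 W w0 ` pmaps X x0 W w0"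

text \<open>Induced map g^* : [Y,W] \<rightarrow> [X,W] for g : X \<rightarrow> Y, on a class via a representative.\<close>
definition pullback :: "'a frol \<Rightarrow> 'a \<Rightarrow> 'b frol \<Rightarrow> 'b \<Rightarrow> ('a \<Rightarrow> 'c)
                         \<Rightarrow> ('c \<Rightarrow> 'b) set \<Rightarrow> ('a \<Rightarrow> 'b) set" where
  "pullback X x0 W w0 g c = hcls X x0 W w0 ((SOME f. f \<in> c) \<circ> g)"

end

theory Submission
  imports Defs "HOL-Computational_Algebra.Polynomial"
begin

text \<open>
  The inclusion \<open>im p\<^sup>* \<subseteq> ker i\<^sup>*\<close> is formal: a map factoring through \<open>X/A\<close> is
  constant on \<open>A\<close>.  For the converse let \<open>g : X \<rightarrow> W\<close> be a pointed map whose
  restriction to \<open>A\<close> is null-homotopic.  The SNDR data \<open>(u, H)\<close> give a homotopy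
  extension property: every pointed homotopy of \<open>g|\<^sub>A\<close> extends to a homotopy of \<open>g\<close>.
  It is built in two stages: first \<open>g\<close> is deformed along \<open>H\<close> so that near \<open>A\<close> it
  factors through the retraction \<open>x \<mapsto> H(1,x)\<close>; then the given homotopy on \<open>A\<close> is
  transported along this retraction and switched off by a smooth cut-off in \<open>u\<close>.
  Following the null-homotopy of \<open>g|\<^sub>A\<close> we obtain \<open>g \<simeq> g'\<close> with \<open>g'\<close> constant on
  \<open>A\<close>, so \<open>g'\<close> descends to \<open>X/A\<close>.
\<close>

section \<open>Calculus of smooth real functions\<close>

lemma Cinf_coinduct:
  assumes T: "\<And>f. f \<in> T \<Longrightarrow> (\<forall>x. f differentiable (at x)) \<and> deriv f \<in> T" and "f \<in> T"
  shows "Cinf f"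
proof -
  have "(deriv ^^ n) f \<in> T" for n
    by (induction n) (use assms in auto)
  then show ?thesis using T unfolding Cinf_def Cinf_on_def by blast
qed

lemma Cinf_differentiable: "Cinf f \<Longrightarrow> f differentiable (at x)"
  unfolding Cinf_def Cinf_on_def by (metis UNIV_I funpow_0)

lemma Cinf_deriv: "Cinf f \<Longrightarrow> Cinf (deriv f)"
  unfolding Cinf_def Cinf_on_def by (metis funpow_Suc_right o_apply)

lemma Cinf_DERIV: "Cinf f \<Longrightarrow> DERIV f x :> deriv f x"
  using Cinf_differentiable DERIV_deriv_iff_real_differentiable by blast

lemma Cinf_isCont: "Cinf f \<Longrightarrow> isCont f x"
  using Cinf_DERIV DERIV_isCont by blast

lemma Cinf_affine: "Cinf (\<lambda>x. (a::real) * x + b)"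
proof (rule Cinf_coinduct[where T="{(\<lambda>x::real. a * x + b) | a b. True}"])
  fix f :: "real \<Rightarrow> real" assume "f \<in> {(\<lambda>x::real. a * x + b) | a b. True}"
  then obtain a b :: real where f: "f = (\<lambda>x. a * x + b)" by blast
  have d: "DERIV f x :> a" for x unfolding f by (auto intro!: derivative_eq_intros)
  then have "deriv f = (\<lambda>x. 0 * x + a)" by (auto intro!: ext DERIV_imp_deriv)
  then show "(\<forall>x. f differentiable (at x)) \<and> deriv f \<in> {(\<lambda>x. a * x + b) | a b. True}"
    using d real_differentiable_def by blast
qed auto

lemma Cinf_const: "Cinf (\<lambda>x. c)"
  using Cinf_affine[of 0 c] by simp

lemma Cinf_id: "Cinf (\<lambda>x. x)"
  using Cinf_affine[of 1 0] by simp

lemma Cinf_add: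
  assumes "Cinf f" "Cinf g" shows "Cinf (\<lambda>x. f x + g x)"
proof (rule Cinf_coinduct[where T="{(\<lambda>x. f x + g x) | f g. Cinf f \<and> Cinf g}"])
  fix h assume "h \<in> {(\<lambda>x. f x + g x) | f g. Cinf f \<and> Cinf g}"
  then obtain f g where h: "h = (\<lambda>x. f x + g x)" "Cinf f" "Cinf g" by blast
  have d: "DERIV h x :> deriv f x + deriv g x" for x
    unfolding h by (intro DERIV_add Cinf_DERIV h)
  then have "deriv h = (\<lambda>x. deriv f x + deriv g x)" by (auto intro!: ext DERIV_imp_deriv)
  then show "(\<forall>x. h differentiable (at x)) \<and> deriv h \<in> {(\<lambda>x. f x + g x) | f g. Cinf f \<and> Cinf g}"
    using d real_differentiable_def h Cinf_deriv by blast
qed (use assms in auto)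

text \<open>Finite sums of products of \<open>C\<^sup>\<infinity>\<close> functions are closed under differentiation
  (Leibniz rule); this is the invariant behind the product rule for \<open>C\<^sup>\<infinity>\<close>.\<close>
inductive sum_of_products :: "(real \<Rightarrow> real) \<Rightarrow> bool" where
  product: "Cinf f \<Longrightarrow> Cinf g \<Longrightarrow> sum_of_products (\<lambda>x. f x * g x)"
| sum: "sum_of_products a \<Longrightarrow> sum_of_products b \<Longrightarrow> sum_of_products (\<lambda>x. a x + b x)"

lemma deriv_add_everywhere:
  fixes a b :: "real \<Rightarrow> real"
  assumes "\<forall>x. a differentiable (at x)" "\<forall>x. b differentiable (at x)"
  shows "deriv (\<lambda>x. a x + b x) = (\<lambda>x. deriv a x + deriv b x)"
  using assms by (intro ext DERIV_imp_deriv DERIV_add) (simp_all add: DERIV_deriv_iff_real_differentiable)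

lemma sum_of_products_deriv:
  "sum_of_products h \<Longrightarrow> (\<forall>x. h differentiable (at x)) \<and> sum_of_products (deriv h)"
proof (induction rule: sum_of_products.induct)
  case (product f g)
  have d: "DERIV (\<lambda>x. f x * g x) x :> deriv f x * g x + f x * deriv g x" for x
    using DERIV_mult[OF Cinf_DERIV[OF product(1)] Cinf_DERIV[OF product(2)]]
    by (simp add: algebra_simps)
  then have "deriv (\<lambda>x. f x * g x) = (\<lambda>x. deriv f x * g x + f x * deriv g x)"
    by (auto intro!: ext DERIV_imp_deriv)
  moreover have "sum_of_products (\<lambda>x. deriv f x * g x + f x * deriv g x)"
    by (intro sum_of_products.intros Cinf_deriv product)
  ultimately show ?case using d real_differentiable_def by metis
next
  case (sum a b)
  then show ?case by (simp add: deriv_add_everywhere sum_of_products.sum)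
qed

lemma Cinf_mult:
  assumes "Cinf f" "Cinf g" shows "Cinf (\<lambda>x. f x * g x)"
  by (rule Cinf_coinduct[where T="Collect sum_of_products"])
     (use sum_of_products_deriv sum_of_products.product assms in auto)

lemma Cinf_diff:
  assumes "Cinf f" "Cinf g" shows "Cinf (\<lambda>x. f x - g x)"
  using Cinf_add[OF assms(1) Cinf_mult[OF Cinf_const assms(2)], of "-1"] by simp

text \<open>Finite sums of terms \<open>f(g x) \<cdot> h x\<close> with \<open>f, h\<close> smooth are closed under
  differentiation when \<open>g\<close> is smooth (chain rule); this yields closure under
  composition.\<close>
inductive chain_terms :: "(real \<Rightarrow> real) \<Rightarrow> (real \<Rightarrow> real) \<Rightarrow> bool" for g where
  chain_term: "Cinf f \<Longrightarrow> Cinf h \<Longrightarrow> chain_terms g (\<lambda>x. f (g x) * h x)"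
| sum: "chain_terms g a \<Longrightarrow> chain_terms g b \<Longrightarrow> chain_terms g (\<lambda>x. a x + b x)"

lemma chain_terms_deriv:
  assumes g: "Cinf g"
  shows "chain_terms g k \<Longrightarrow> (\<forall>x. k differentiable (at x)) \<and> chain_terms g (deriv k)"
proof (induction rule: chain_terms.induct)
  case (chain_term f h)
  have d: "DERIV (\<lambda>x. f (g x) * h x) x :>
             deriv f (g x) * (deriv g x * h x) + f (g x) * deriv h x" for x
  proof -
    have "DERIV (\<lambda>x. f (g x)) x :> deriv f (g x) * deriv g x"
      by (rule DERIV_chain2[OF Cinf_DERIV Cinf_DERIV]) (use chain_term g in auto)
    from DERIV_mult[OF this Cinf_DERIV[OF chain_term(2)]] show ?thesis by (simp add: algebra_simps)
  qed
  then have "deriv (\<lambda>x. f (g x) * h x) =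
               (\<lambda>x. deriv f (g x) * (deriv g x * h x) + f (g x) * deriv h x)"
    by (auto intro!: ext DERIV_imp_deriv)
  moreover have "chain_terms g (\<lambda>x. deriv f (g x) * (deriv g x * h x) + f (g x) * deriv h x)"
    by (intro chain_terms.intros Cinf_deriv Cinf_mult chain_term g)
  ultimately show ?case using d real_differentiable_def by metis
next
  case (sum a b)
  then show ?case by (simp add: deriv_add_everywhere chain_terms.sum)
qed

lemma Cinf_compose:
  assumes "Cinf f" "Cinf g" shows "Cinf (\<lambda>x. f (g x))"
proof -
  have "chain_terms g (\<lambda>x. f (g x) * 1)" by (intro chain_terms.chain_term assms Cinf_const)
  then show ?thesis
    by (intro Cinf_coinduct[where T="Collect (chain_terms g)"]) (use chain_terms_deriv assms in auto)
qed

lemma Cinf_o: "Cinf f \<Longrightarrow> Cinf g \<Longrightarrow> Cinf (f \<circ> g)"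
  unfolding comp_def by (rule Cinf_compose)

text \<open>Quotient rule for \<open>f / g\<^sup>n\<close>, the invariant used for closure under division.\<close>
lemma DERIV_divide_power:
  assumes g: "Cinf g" "\<And>x. g x \<noteq> 0" and f: "Cinf f"
  shows "DERIV (\<lambda>x. f x / g x ^ n) x :>
           (deriv f x * g x - real n * f x * deriv g x) / g x ^ Suc n"
proof -
  have "DERIV (\<lambda>x. f x / g x ^ n) x :>
          (deriv f x * g x ^ n - f x * (real n * g x ^ (n - 1) * deriv g x)) / (g x ^ n * g x ^ n)"
    using DERIV_divide[OF Cinf_DERIV[OF f] DERIV_power[OF Cinf_DERIV[OF g(1)]]] g(2)[of x]
    by (simp add: algebra_simps)
  moreover have "(deriv f x * g x ^ n - f x * (real n * g x ^ (n - 1) * deriv g x)) / (g x ^ n * g x ^ n)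
       = (deriv f x * g x - real n * f x * deriv g x) / g x ^ Suc n"
  proof (cases n)
    case 0 then show ?thesis using g(2)[of x] by (simp add: field_simps)
  next
    case (Suc m) then show ?thesis using g(2)[of x] by (simp add: field_simps power_Suc)
  qed
  ultimately show ?thesis by simp
qed

lemma Cinf_divide:
  assumes g: "Cinf g" "\<And>x. g x \<noteq> 0" and f: "Cinf f"
  shows "Cinf (\<lambda>x. f x / g x)"
proof -
  let ?T = "{(\<lambda>x. f x / g x ^ n) | f n. Cinf f}"
  have "Cinf (\<lambda>x. f x / g x ^ 1)"
  proof (rule Cinf_coinduct[where T="?T"])
    fix h assume "h \<in> ?T"
    then obtain f n where h: "h = (\<lambda>x. f x / g x ^ n)" "Cinf f" by blast
    have d: "DERIV h x :> (deriv f x * g x - real n * f x * deriv g x) / g x ^ Suc n" for x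
      unfolding h by (rule DERIV_divide_power) (use g h in auto)
    then have "deriv h = (\<lambda>x. (deriv f x * g x - real n * f x * deriv g x) / g x ^ Suc n)"
      by (auto intro!: ext DERIV_imp_deriv)
    moreover have "Cinf (\<lambda>x. deriv f x * g x - real n * (f x * deriv g x))"
      by (intro Cinf_diff Cinf_mult Cinf_deriv Cinf_const h g)
    then have "Cinf (\<lambda>x. deriv f x * g x - real n * f x * deriv g x)"
      by (simp add: mult.assoc)
    ultimately have "deriv h \<in> ?T"
      by (intro CollectI exI[of _ "\<lambda>x. deriv f x * g x - real n * f x * deriv g x"]
            exI[of _ "Suc n"]) simp
    then show "(\<forall>x. h differentiable (at x)) \<and> deriv h \<in> ?T"
      using d real_differentiable_def by blast
  qed (use f in \<open>auto intro!: exI[of _ f] exI[of _ 1]\<close>)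
  then show ?thesis by simp
qed

lemma Cinf_local:
  assumes "\<And>s0. \<exists>\<delta>>0. \<exists>\<phi>. Cinf \<phi> \<and> (\<forall>s. \<bar>s - s0\<bar> < \<delta> \<longrightarrow> F s = \<phi> s)"
  shows "Cinf F"
proof (rule Cinf_coinduct[where T="{F. \<forall>s0. \<exists>\<delta>>0. \<exists>\<phi>. Cinf \<phi> \<and> (\<forall>s. \<bar>s - s0\<bar> < \<delta> \<longrightarrow> F s = \<phi> s)}"])
  fix F assume F: "F \<in> {F. \<forall>s0. \<exists>\<delta>>0. \<exists>\<phi>. Cinf \<phi> \<and> (\<forall>s. \<bar>s - s0\<bar> < \<delta> \<longrightarrow> F s = \<phi> s)}"
  have D: "DERIV F s :> deriv \<phi> s"
    if "Cinf \<phi>" "\<forall>s. \<bar>s - s0\<bar> < \<delta> \<longrightarrow> F s = \<phi> s" "\<bar>s - s0\<bar> < \<delta>" for \<phi> s0 \<delta> s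
  proof (rule has_field_derivative_transform_within_open[OF Cinf_DERIV[OF that(1)],
                of "{s0-\<delta><..<s0+\<delta>}"])
    show "s \<in> {s0 - \<delta><..<s0 + \<delta>}" using that(3) by (auto simp: abs_less_iff)
    show "\<And>x. x \<in> {s0 - \<delta><..<s0 + \<delta>} \<Longrightarrow> \<phi> x = F x" using that(2) by (auto simp: abs_less_iff)
  qed auto
  have "F differentiable (at s0)" for s0
  proof -
    obtain \<delta> \<phi> where "\<delta> > 0" "Cinf \<phi>" "\<forall>s. \<bar>s - s0\<bar> < \<delta> \<longrightarrow> F s = \<phi> s" using F by blast
    then have "DERIV F s0 :> deriv \<phi> s0" by (intro D) auto
    then show ?thesis using real_differentiable_def by auto
  qed
  moreover have "\<exists>\<delta>>0. \<exists>\<phi>. Cinf \<phi> \<and> (\<forall>s. \<bar>s - s0\<bar> < \<delta> \<longrightarrow> deriv F s = \<phi> s)" for s0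
  proof -
    obtain \<delta> \<phi> where h: "\<delta> > 0" "Cinf \<phi>" "\<forall>s. \<bar>s - s0\<bar> < \<delta> \<longrightarrow> F s = \<phi> s" using F by blast
    have "deriv F s = deriv \<phi> s" if "\<bar>s - s0\<bar> < \<delta>" for s
      by (rule DERIV_imp_deriv, rule D[OF h(2) h(3) that])
    then show ?thesis using h Cinf_deriv by (intro exI[of _ \<delta>] exI[of _ "deriv \<phi>"]) auto
  qed
  ultimately show "(\<forall>x. F differentiable (at x)) \<and>
      deriv F \<in> {F. \<forall>s0. \<exists>\<delta>>0. \<exists>\<phi>. Cinf \<phi> \<and> (\<forall>s. \<bar>s - s0\<bar> < \<delta> \<longrightarrow> F s = \<phi> s)}"
    by blast
qed (use assms in auto)

lemma Cinf_pos_nbhd: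
  assumes "Cinf f" "f s0 > 0"
  shows "\<exists>\<delta>>0. \<forall>s. \<bar>s - s0\<bar> < \<delta> \<longrightarrow> f s > 0"
proof -
  have "f \<midarrow>s0\<rightarrow> f s0" using Cinf_isCont[OF assms(1)] by (simp add: isCont_def)
  then obtain d where d: "d > 0" "\<forall>x. x \<noteq> s0 \<and> norm (x - s0) < d \<longrightarrow> norm (f x - f s0) < f s0"
    using assms(2) unfolding LIM_eq by blast
  have "f s > 0" if "\<bar>s - s0\<bar> < d" for s
  proof (cases "s = s0")
    case False then have "\<bar>f s - f s0\<bar> < f s0" using d that by auto
    then show ?thesis by linarith
  qed (use assms(2) in simp)
  then show ?thesis using d(1) by blast
qed

section \<open>Flat functions, smooth steps and cut-offs\<close>

text \<open>The functions \<open>x \<mapsto> p(1/x) e\<^sup>-\<^sup>1\<^sup>/\<^sup>x\<close> for \<open>x > 0\<close>, extended by \<open>0\<close>; this class is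
  closed under differentiation, so all its members are \<open>C\<^sup>\<infinity>\<close>.\<close>
definition flat_poly :: "real poly \<Rightarrow> real \<Rightarrow> real" where
  "flat_poly p x = (if x > 0 then poly p (inverse x) * exp (- inverse x) else 0)"

lemma poly_exp_lim: "((\<lambda>y. poly p y * exp (- y)) \<longlongrightarrow> (0::real)) at_top"
proof -
  have "((\<lambda>y. \<Sum>i\<le>degree p. coeff p i * (y ^ i / exp y)) \<longlongrightarrow> (\<Sum>i\<le>degree p. coeff p i * 0)) at_top"
    by (intro tendsto_sum tendsto_mult tendsto_const tendsto_power_div_exp_0)
  moreover have "(\<Sum>i\<le>degree p. coeff p i * (y ^ i / exp y)) = poly p y * exp (- y)" for y
  proof -
    have "(\<Sum>i\<le>degree p. coeff p i * (y ^ i / exp y)) = (\<Sum>i\<le>degree p. coeff p i * y ^ i) / exp y"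
      by (simp add: sum_divide_distrib)
    also have "\<dots> = poly p y * exp (- y)" by (simp add: poly_altdef exp_minus field_simps)
    finally show ?thesis .
  qed
  ultimately show ?thesis by simp
qed

text \<open>The polynomial describing the derivative of \<open>flat_poly p\<close>.\<close>
definition flat_poly_deriv :: "real poly \<Rightarrow> real poly" where
  "flat_poly_deriv p = [:0,0,1:] * (p - pderiv p)"

lemma flat_poly_DERIV_pos:
  assumes x: "x > 0"
  shows "DERIV (flat_poly p) x :> flat_poly (flat_poly_deriv p) x"
proof -
  have x0: "x \<noteq> 0" using x by simp
  have d1: "DERIV (\<lambda>x. poly p (inverse x)) x :>
              poly (pderiv p) (inverse x) * (- (inverse x ^ Suc (Suc 0)))"
    by (rule DERIV_chain2[OF poly_DERIV DERIV_inverse[OF x0]])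
  have d2: "DERIV (\<lambda>x. exp (- inverse x)) x :> exp (- inverse x) * (- (- (inverse x ^ Suc (Suc 0))))"
    by (rule DERIV_chain2[OF DERIV_exp DERIV_minus[OF DERIV_inverse[OF x0]]])
  have d: "DERIV (\<lambda>x. poly p (inverse x) * exp (- inverse x)) x :> flat_poly (flat_poly_deriv p) x"
    using DERIV_mult[OF d1 d2] x
    by (simp add: flat_poly_def flat_poly_deriv_def algebra_simps power2_eq_square)
  show ?thesis
    by (rule has_field_derivative_transform_within_open[OF d, of "{0<..}"])
       (use x in \<open>auto simp: flat_poly_def\<close>)
qed

lemma flat_poly_DERIV_neg:
  assumes x: "x < 0"
  shows "DERIV (flat_poly p) x :> flat_poly (flat_poly_deriv p) x"
proof -
  have "DERIV (\<lambda>x. 0::real) x :> 0" by simp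
  then have "DERIV (flat_poly p) x :> 0"
    by (rule has_field_derivative_transform_within_open[of _ _ _ "{..<0}"])
       (use x in \<open>auto simp: flat_poly_def\<close>)
  then show ?thesis using x by (simp add: flat_poly_def)
qed

text \<open>At \<open>0\<close> the difference quotient vanishes from both sides, since \<open>e\<^sup>-\<^sup>y\<close>
  beats every polynomial in \<open>y = 1/x\<close>.\<close>
lemma flat_poly_DERIV_0: "DERIV (flat_poly p) 0 :> flat_poly (flat_poly_deriv p) 0"
proof -
  have "((\<lambda>y. (flat_poly p y - flat_poly p 0) / (y - 0)) \<longlongrightarrow> 0) (at (0::real))"
  proof (rule filterlim_split_at)
    have "eventually (\<lambda>y::real. y < 0) (at_left 0)"
      by (simp add: eventually_at_filter)
    then have "eventually (\<lambda>y. 0 = (flat_poly p y - flat_poly p 0) / (y - 0)) (at_left 0)"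
      by eventually_elim (simp add: flat_poly_def)
    then show "((\<lambda>y. (flat_poly p y - flat_poly p 0) / (y - 0)) \<longlongrightarrow> 0) (at_left 0)"
      by (rule Lim_transform_eventually[OF tendsto_const])
  next
    have lim: "((\<lambda>y. poly (pCons 0 p) (inverse y) * exp (- inverse y)) \<longlongrightarrow> 0) (at_right (0::real))"
      by (rule filterlim_compose[OF poly_exp_lim filterlim_inverse_at_top_right])
    have "eventually (\<lambda>y::real. y > 0) (at_right 0)"
      by (simp add: eventually_at_filter)
    then have "eventually (\<lambda>y. poly (pCons 0 p) (inverse y) * exp (- inverse y)
                 = (flat_poly p y - flat_poly p 0) / (y - 0)) (at_right 0)"
      by eventually_elim (simp add: flat_poly_def field_simps)
    then show "((\<lambda>y. (flat_poly p y - flat_poly p 0) / (y - 0)) \<longlongrightarrow> 0) (at_right 0)"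
      by (rule Lim_transform_eventually[OF lim])
  qed
  then have "DERIV (flat_poly p) 0 :> 0" by (simp add: has_field_derivative_iff)
  then show ?thesis by (simp add: flat_poly_def)
qed

lemma flat_poly_DERIV: "DERIV (flat_poly p) x :> flat_poly (flat_poly_deriv p) x"
  using flat_poly_DERIV_pos flat_poly_DERIV_neg flat_poly_DERIV_0 by (cases "x > 0"; cases "x < 0") auto

lemma Cinf_flat_poly: "Cinf (flat_poly p)"
proof (rule Cinf_coinduct[where T="range flat_poly"])
  fix f assume "f \<in> range flat_poly"
  then obtain p where f: "f = flat_poly p" by blast
  have "deriv f = flat_poly (flat_poly_deriv p)"
    unfolding f by (auto intro!: ext DERIV_imp_deriv flat_poly_DERIV)
  then show "(\<forall>x. f differentiable (at x)) \<and> deriv f \<in> range flat_poly"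
    using flat_poly_DERIV f real_differentiable_def by blast
qed auto

definition flat :: "real \<Rightarrow> real" where "flat = flat_poly 1"

lemma Cinf_flat: "Cinf flat" unfolding flat_def by (rule Cinf_flat_poly)
lemma flat_pos: "x > 0 \<Longrightarrow> flat x > 0" by (simp add: flat_def flat_poly_def)
lemma flat_zero: "x \<le> 0 \<Longrightarrow> flat x = 0" by (simp add: flat_def flat_poly_def)
lemma flat_nonneg: "flat x \<ge> 0" by (simp add: flat_def flat_poly_def)

definition step :: "real \<Rightarrow> real \<Rightarrow> real \<Rightarrow> real" where
  "step a b x = flat (x - a) / (flat (x - a) + flat (b - x))"

lemma step_denominator: "a < b \<Longrightarrow> flat (x - a) + flat (b - x) > 0"
  using flat_pos flat_nonneg by (cases "x > a") (auto intro: add_pos_nonneg add_nonneg_pos)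

lemma Cinf_step: assumes "a < b" shows "Cinf (step a b)"
proof -
  have "Cinf (\<lambda>x. flat (x - a) / (flat (x - a) + flat (b - x)))"
    by (intro Cinf_divide Cinf_add Cinf_compose[OF Cinf_flat] Cinf_affine[of 1 "-a", simplified]
          Cinf_affine[of "-1" b, simplified])
       (use step_denominator[OF assms] in \<open>auto simp: less_le\<close>)
  then show ?thesis unfolding step_def[abs_def] .
qed

lemma step_low: "a < b \<Longrightarrow> x \<le> a \<Longrightarrow> step a b x = 0"
  by (simp add: step_def flat_zero)

lemma step_high: "a < b \<Longrightarrow> x \<ge> b \<Longrightarrow> step a b x = 1"
  using step_denominator[of a b x] by (simp add: step_def flat_zero)

lemma step_range: "a < b \<Longrightarrow> 0 \<le> step a b x \<and> step a b x \<le> 1"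
  using step_denominator[of a b x] flat_nonneg[of "x-a"] flat_nonneg[of "b-x"]
  by (simp add: step_def divide_le_eq_1)

lemma step_pos: "a < b \<Longrightarrow> step a b x > 0 \<Longrightarrow> x > a"
  by (metis step_low not_le order_less_irrefl)

lemma step_lt1: "a < b \<Longrightarrow> step a b x < 1 \<Longrightarrow> x < b"
  by (metis step_high not_le order_less_irrefl)

lemma cutoff_exists:
  assumes "\<delta> > 0"
  shows "\<exists>\<sigma>. Cinf \<sigma> \<and> (\<forall>s. \<bar>\<sigma> s - s0\<bar> < \<delta>) \<and> (\<forall>s. \<bar>s - s0\<bar> < \<delta>/2 \<longrightarrow> \<sigma> s = s)"
proof -
  have hd: "0 < \<delta>/2" using assms by simp
  define b where "b r = step 0 (\<delta>/2) (r + \<delta>) * step 0 (\<delta>/2) (\<delta> - r)" for r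
  define \<sigma> where "\<sigma> s = s0 + (s - s0) * b (s - s0)" for s
  have "Cinf (\<lambda>s. s0 + (1 * s + (- s0)) *
          (step 0 (\<delta>/2) (1 * s + (\<delta> - s0)) * step 0 (\<delta>/2) ((-1) * s + (\<delta> + s0))))"
    by (intro Cinf_add Cinf_const Cinf_mult Cinf_affine
          Cinf_compose[OF Cinf_step[OF hd] Cinf_affine])
  then have "Cinf (\<lambda>s. s0 + (s - s0) * (step 0 (\<delta>/2) ((s - s0) + \<delta>) * step 0 (\<delta>/2) (\<delta> - (s - s0))))"
    by (simp add: algebra_simps)
  then have c: "Cinf \<sigma>" unfolding \<sigma>_def b_def .
  have b01: "0 \<le> b r \<and> b r \<le> 1" for r
    using step_range[OF hd] unfolding b_def by (simp add: mult_le_one)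
  have "\<bar>\<sigma> s - s0\<bar> < \<delta>" for s
  proof (cases "\<bar>s - s0\<bar> < \<delta>")
    case True
    have "\<bar>(s - s0) * b (s - s0)\<bar> \<le> \<bar>s - s0\<bar>"
      using b01[of "s-s0"] by (simp add: abs_mult mult_left_le)
    then show ?thesis using True by (simp add: \<sigma>_def)
  next
    case False
    then have "s - s0 \<ge> \<delta> \<or> s - s0 \<le> -\<delta>" by auto
    then have "b (s - s0) = 0" unfolding b_def using step_low[OF hd] by auto
    then show ?thesis using assms by (simp add: \<sigma>_def)
  qed
  moreover have "\<sigma> s = s" if "\<bar>s - s0\<bar> < \<delta>/2" for s
  proof -
    have "step 0 (\<delta>/2) (s - s0 + \<delta>) = 1" "step 0 (\<delta>/2) (\<delta> - (s - s0)) = 1"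
      using that by (auto intro!: step_high[OF hd] simp: field_simps; simp add: abs_less_iff; linarith)+
    then show ?thesis by (simp add: \<sigma>_def b_def)
  qed
  ultimately show ?thesis using c by blast
qed

text \<open>Smoothness can be tested on smooth reparametrisations into small intervals:
  this is how smoothness of a function defined by cases is verified.\<close>
lemma Cinf_by_local_reparam:
  assumes "\<And>s0. \<exists>\<delta>>0. \<forall>\<sigma>. Cinf \<sigma> \<longrightarrow> (\<forall>s. \<bar>\<sigma> s - s0\<bar> < \<delta>) \<longrightarrow> Cinf (F \<circ> \<sigma>)"
  shows "Cinf F"
proof (rule Cinf_local)
  fix s0
  obtain \<delta> where \<delta>: "\<delta> > 0" "\<forall>\<sigma>. Cinf \<sigma> \<longrightarrow> (\<forall>s. \<bar>\<sigma> s - s0\<bar> < \<delta>) \<longrightarrow> Cinf (F \<circ> \<sigma>)"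
    using assms by blast
  obtain \<sigma> where \<sigma>: "Cinf \<sigma>" "\<forall>s. \<bar>\<sigma> s - s0\<bar> < \<delta>" "\<forall>s. \<bar>s - s0\<bar> < \<delta>/2 \<longrightarrow> \<sigma> s = s"
    using cutoff_exists[OF \<delta>(1)] by blast
  show "\<exists>\<epsilon>>0. \<exists>\<phi>. Cinf \<phi> \<and> (\<forall>s. \<bar>s - s0\<bar> < \<epsilon> \<longrightarrow> F s = \<phi> s)"
    using \<delta> \<sigma> by (intro exI[of _ "\<delta>/2"] exI[of _ "F \<circ> \<sigma>"]) auto
qed

section \<open>Froelicher structures\<close>

lemma gen_by_funs_simps:
  "fcar (gen_by_funs S F0) = S"
  "fcurv (gen_by_funs S F0) = {c. (\<forall>s. c s \<in> S) \<and> (\<forall>f\<in>F0. Cinf (f \<circ> c))}"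
  "ffun (gen_by_funs S F0) = {f. \<forall>c\<in>fcurv (gen_by_funs S F0). Cinf (f \<circ> c)}"
  by (simp_all add: gen_by_funs_def Let_def)

lemma gen_by_curves_simps:
  "fcar (gen_by_curves S C0) = S"
  "ffun (gen_by_curves S C0) = {f. \<forall>c\<in>C0. Cinf (f \<circ> c)}"
  "fcurv (gen_by_curves S C0) = {c. (\<forall>s. c s \<in> S) \<and> (\<forall>f\<in>ffun (gen_by_curves S C0). Cinf (f \<circ> c))}"
  by (simp_all add: gen_by_curves_def Let_def)

lemma frolicher_gen_by_funs: "frolicher (gen_by_funs S F0)"
  unfolding frolicher_def gen_by_funs_simps by auto

lemma frolicher_gen_by_curves:
  assumes "\<forall>c\<in>C0. \<forall>s. c s \<in> S"
  shows "frolicher (gen_by_curves S C0)"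
proof -
  have "C0 \<subseteq> fcurv (gen_by_curves S C0)"
    using assms unfolding gen_by_curves_simps by auto
  then show ?thesis
    unfolding frolicher_def by (auto simp: gen_by_curves_simps)
qed

lemma gen_by_funs_generator: "f \<in> F0 \<Longrightarrow> f \<in> ffun (gen_by_funs S F0)"
  unfolding gen_by_funs_simps(3) unfolding gen_by_funs_simps(2) by blast

lemma frolicher_curv: "frolicher X \<Longrightarrow> x \<in> fcurv X \<longleftrightarrow> (\<forall>s. x s \<in> fcar X) \<and> (\<forall>f\<in>ffun X. Cinf (f \<circ> x))"
  unfolding frolicher_def by blast

lemma frolicher_fun: "frolicher X \<Longrightarrow> f \<in> ffun X \<longleftrightarrow> (\<forall>c\<in>fcurv X. Cinf (f \<circ> c))"
  unfolding frolicher_def by blast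

lemma frolicher_funD: "frolicher X \<Longrightarrow> f \<in> ffun X \<Longrightarrow> c \<in> fcurv X \<Longrightarrow> Cinf (f \<circ> c)"
  unfolding frolicher_def by blast

lemma curve_in_carrier: "frolicher X \<Longrightarrow> x \<in> fcurv X \<Longrightarrow> x s \<in> fcar X"
  using frolicher_curv by blast

lemma curve_reparam:
  assumes X: "frolicher X" and x: "x \<in> fcurv X" and \<sigma>: "Cinf \<sigma>"
  shows "x \<circ> \<sigma> \<in> fcurv X"
  using x Cinf_o[OF _ \<sigma>] unfolding frolicher_curv[OF X] by (simp add: o_assoc)

lemma const_curve: "frolicher X \<Longrightarrow> p \<in> fcar X \<Longrightarrow> (\<lambda>_. p) \<in> fcurv X"
  unfolding frolicher_curv by (simp add: comp_def Cinf_const)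

lemma smooth_map_by_curves:
  assumes "frolicher X" "\<And>x. x \<in> fcar X \<Longrightarrow> \<phi> x \<in> fcar Y"
    and "\<And>g c. g \<in> ffun Y \<Longrightarrow> c \<in> fcurv X \<Longrightarrow> Cinf (g \<circ> \<phi> \<circ> c)"
  shows "smooth_map X Y \<phi>"
  unfolding smooth_map_def frolicher_fun[OF assms(1)] using assms(2,3) by (simp add: o_assoc)

lemma smooth_map_curve:
  "frolicher X \<Longrightarrow> smooth_map X Y \<phi> \<Longrightarrow> g \<in> ffun Y \<Longrightarrow> c \<in> fcurv X \<Longrightarrow> Cinf (g \<circ> \<phi> \<circ> c)"
  unfolding smooth_map_def frolicher_fun by blast

lemma smooth_map_car: "smooth_map X Y \<phi> \<Longrightarrow> x \<in> fcar X \<Longrightarrow> \<phi> x \<in> fcar Y"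
  unfolding smooth_map_def by blast

lemma smooth_map_curve_image:
  assumes X: "frolicher X" and Y: "frolicher Y" and \<phi>: "smooth_map X Y \<phi>" and c: "c \<in> fcurv X"
  shows "\<phi> \<circ> c \<in> fcurv Y"
  unfolding frolicher_curv[OF Y]
  using smooth_map_car[OF \<phi> curve_in_carrier[OF X c]] smooth_map_curve[OF X \<phi> _ c]
  by (simp add: o_assoc)

lemma smooth_map_comp: "smooth_map X Y g \<Longrightarrow> smooth_map Y Z f \<Longrightarrow> smooth_map X Z (f \<circ> g)"
  unfolding smooth_map_def by (simp add: o_assoc)

lemma smooth_map_id: "smooth_map X X id"
  unfolding smooth_map_def by simp

lemma smooth_map_const: "frolicher X \<Longrightarrow> w \<in> fcar W \<Longrightarrow> smooth_map X W (\<lambda>_. w)"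
  by (rule smooth_map_by_curves) (simp_all add: comp_def Cinf_const)

lemma frolicher_unitI: "frolicher unitI"
  unfolding unitI_def frol_subspace_def by (rule frolicher_gen_by_funs)

lemma unitI_car [simp]: "fcar unitI = {0..1}"
  by (simp add: unitI_def frol_subspace_def gen_by_funs_simps)

lemma unitI_curv: "c \<in> fcurv unitI \<longleftrightarrow> (\<forall>s. c s \<in> {0..1}) \<and> Cinf c"
proof -
  have "c \<in> fcurv unitI \<longleftrightarrow> (\<forall>s. c s \<in> {0..1}) \<and> (\<forall>f. Cinf f \<longrightarrow> Cinf (f \<circ> c))"
    by (simp add: unitI_def frol_subspace_def gen_by_funs_simps real_frol_def)
  moreover have "(\<forall>f. Cinf f \<longrightarrow> Cinf (f \<circ> c)) \<longleftrightarrow> Cinf c"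
  proof
    assume "\<forall>f. Cinf f \<longrightarrow> Cinf (f \<circ> c)"
    then have "Cinf ((\<lambda>x. x) \<circ> c)" using Cinf_id by blast
    then show "Cinf c" by (simp add: comp_def)
  qed (use Cinf_o in blast)
  ultimately show ?thesis by simp
qed

lemma Cinf_unitI_fun: "Cinf f \<Longrightarrow> f \<in> ffun unitI"
  by (simp add: frolicher_fun[OF frolicher_unitI] unitI_curv Cinf_o)

lemma unitI_fun_Cinf_curve:
  "f \<in> ffun unitI \<Longrightarrow> Cinf c \<Longrightarrow> \<forall>s. c s \<in> {0..1} \<Longrightarrow> Cinf (f \<circ> c)"
  by (rule frolicher_funD[OF frolicher_unitI]) (simp_all add: unitI_curv)

lemma smooth_map_reverse: "smooth_map unitI unitI (\<lambda>t. 1 - t)"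
proof (rule smooth_map_by_curves[OF frolicher_unitI])
  fix g c assume g: "g \<in> ffun unitI" and c: "c \<in> fcurv unitI"
  have "Cinf (\<lambda>s. 1 - c s)" using c unfolding unitI_curv by (intro Cinf_diff Cinf_const) auto
  moreover have "\<forall>s. 1 - c s \<in> {0..1}" using c unfolding unitI_curv by auto
  ultimately show "Cinf (g \<circ> (\<lambda>t. 1 - t) \<circ> c)"
    using unitI_fun_Cinf_curve[OF g] by (simp add: comp_def)
qed auto

lemma frolicher_boldI: "frolicher boldI"
  unfolding boldI_def by (rule frolicher_gen_by_funs)

lemma boldI_car [simp]: "fcar boldI = {0..1}"
  unfolding boldI_def by (rule gen_by_funs_simps(1))

lemma boldI_funI:
  assumes "f \<in> ffun unitI" "0 < \<epsilon>" "\<epsilon> < 1/4"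
    "\<forall>x. 0 \<le> x \<and> x < \<epsilon> \<longrightarrow> f x = f 0" "\<forall>x. 1 - \<epsilon> < x \<and> x \<le> 1 \<longrightarrow> f x = f 1"
  shows "f \<in> ffun boldI"
proof -
  have "f \<in> {f \<in> ffun unitI. \<exists>\<epsilon>. 0 < \<epsilon> \<and> \<epsilon> < 1/4 \<and>
         (\<forall>x. 0 \<le> x \<and> x < \<epsilon> \<longrightarrow> f x = f 0) \<and> (\<forall>x. 1 - \<epsilon> < x \<and> x \<le> 1 \<longrightarrow> f x = f 1)}"
    using assms by blast
  then show ?thesis unfolding boldI_def by (rule gen_by_funs_generator)
qed

lemma Cinf_step_boldI_fun:
  assumes "1/8 \<le> a" "a < b" "b \<le> 7/8" "Cinf \<phi>"
  shows "(\<lambda>v. \<phi> (step a b v)) \<in> ffun boldI"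
proof (rule boldI_funI[where \<epsilon>="1/8"])
  show "(\<lambda>v. \<phi> (step a b v)) \<in> ffun unitI"
    by (intro Cinf_unitI_fun Cinf_compose[OF assms(4) Cinf_step[OF assms(2)]])
  show "\<forall>x. 0 \<le> x \<and> x < 1/8 \<longrightarrow> \<phi> (step a b x) = \<phi> (step a b 0)"
    using step_low[OF assms(2)] assms(1) by auto
  show "\<forall>x. 1 - 1/8 < x \<and> x \<le> 1 \<longrightarrow> \<phi> (step a b x) = \<phi> (step a b 1)"
    using step_high[OF assms(2)] assms(3) by auto
qed auto

lemma unitI_curve_boldI:
  assumes "c \<in> fcurv unitI"
  shows "c \<in> fcurv boldI"
proof -
  have "Cinf c" "\<forall>s. c s \<in> {0..1}" using assms unfolding unitI_curv by auto
  then show ?thesis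
    unfolding boldI_def gen_by_funs_simps(2) by (auto intro!: unitI_fun_Cinf_curve)
qed

lemma frolicher_prod: "frolicher (prod_frol P X)"
  unfolding prod_frol_def by (rule frolicher_gen_by_funs)

lemma prod_car [simp]: "fcar (prod_frol P X) = fcar P \<times> fcar X"
  by (simp add: prod_frol_def gen_by_funs_simps)

lemma prod_curv:
  assumes P: "frolicher P" and X: "frolicher X"
  shows "c \<in> fcurv (prod_frol P X) \<longleftrightarrow> fst \<circ> c \<in> fcurv P \<and> snd \<circ> c \<in> fcurv X"
proof -
  have "c \<in> fcurv (prod_frol P X) \<longleftrightarrow> (\<forall>s. c s \<in> fcar P \<times> fcar X) \<and>
      (\<forall>f\<in>ffun P. Cinf (f \<circ> (fst \<circ> c))) \<and> (\<forall>g\<in>ffun X. Cinf (g \<circ> (snd \<circ> c)))"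
    unfolding prod_frol_def gen_by_funs_simps by (auto simp: o_assoc)
  then show ?thesis
    unfolding frolicher_curv[OF P] frolicher_curv[OF X] by (auto simp: mem_Times_iff)
qed

lemma pair_curve:
  "frolicher P \<Longrightarrow> frolicher X \<Longrightarrow> t \<in> fcurv P \<Longrightarrow> x \<in> fcurv X
   \<Longrightarrow> (\<lambda>s. (t s, x s)) \<in> fcurv (prod_frol P X)"
  by (simp add: prod_curv comp_def)

lemma smooth_map_prod:
  assumes P: "frolicher P" "frolicher P'" and X: "frolicher X" "frolicher Y"
    and a: "smooth_map P P' a" and g: "smooth_map X Y g"
  shows "smooth_map (prod_frol P X) (prod_frol P' Y) (\<lambda>p. (a (fst p), g (snd p)))"
proof (rule smooth_map_by_curves[OF frolicher_prod])
  fix p assume "p \<in> fcar (prod_frol P X)"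
  then show "(a (fst p), g (snd p)) \<in> fcar (prod_frol P' Y)"
    using smooth_map_car[OF a] smooth_map_car[OF g] by (auto simp: mem_Times_iff)
next
  fix h c assume h: "h \<in> ffun (prod_frol P' Y)" and c: "c \<in> fcurv (prod_frol P X)"
  have "a \<circ> (fst \<circ> c) \<in> fcurv P'" "g \<circ> (snd \<circ> c) \<in> fcurv Y"
    using c smooth_map_curve_image[OF P a] smooth_map_curve_image[OF X g] by (simp_all add: prod_curv P X)
  then have "(\<lambda>p. (a (fst p), g (snd p))) \<circ> c \<in> fcurv (prod_frol P' Y)"
    by (simp add: prod_curv P X comp_def)
  from frolicher_funD[OF frolicher_prod h this]
  show "Cinf (h \<circ> (\<lambda>p. (a (fst p), g (snd p))) \<circ> c)" by (simp add: o_assoc)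
qed

lemma smooth_map_snd:
  "frolicher P \<Longrightarrow> frolicher X \<Longrightarrow> smooth_map (prod_frol P X) X snd"
  by (rule smooth_map_by_curves[OF frolicher_prod])
     (auto simp: prod_curv frolicher_curv o_assoc)

lemma smooth_map_slice:
  assumes P: "frolicher P" and X: "frolicher X" and p: "p \<in> fcar P"
  shows "smooth_map X (prod_frol P X) (\<lambda>x. (p, x))"
proof (rule smooth_map_by_curves[OF X])
  fix h c assume h: "h \<in> ffun (prod_frol P X)" and c: "c \<in> fcurv X"
  have "(\<lambda>s. (p, c s)) \<in> fcurv (prod_frol P X)"
    by (rule pair_curve[OF P X const_curve[OF P p] c])
  from frolicher_funD[OF frolicher_prod h this]
  show "Cinf (h \<circ> (\<lambda>x. (p, x)) \<circ> c)" by (simp add: comp_def)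
qed (use p in simp)

lemma frolicher_subspace: "frolicher (frol_subspace X A)"
  unfolding frol_subspace_def by (rule frolicher_gen_by_funs)

lemma subspace_car [simp]: "fcar (frol_subspace X A) = A"
  by (simp add: frol_subspace_def gen_by_funs_simps)

lemma subspace_curv:
  "frolicher X \<Longrightarrow> A \<subseteq> fcar X \<Longrightarrow> c \<in> fcurv (frol_subspace X A) \<longleftrightarrow> (\<forall>s. c s \<in> A) \<and> c \<in> fcurv X"
  unfolding frol_subspace_def gen_by_funs_simps mem_Collect_eq by (metis frolicher_curv subsetD)

lemma smooth_map_inclusion:
  "frolicher X \<Longrightarrow> A \<subseteq> fcar X \<Longrightarrow> smooth_map (frol_subspace X A) X id"
  by (rule smooth_map_by_curves[OF frolicher_subspace])
     (auto simp: subspace_curv frolicher_fun)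

lemma quotient_car [simp]: "fcar (quotient_frol X A) = collapse A ` fcar X"
  by (simp add: quotient_frol_def gen_by_curves_simps)

lemma quotient_fun:
  "\<phi> \<in> ffun (quotient_frol X A) \<longleftrightarrow> (\<forall>c\<in>fcurv X. Cinf (\<phi> \<circ> (collapse A \<circ> c)))"
  unfolding quotient_frol_def gen_by_curves_simps by blast

lemma frolicher_quotient: "frolicher X \<Longrightarrow> frolicher (quotient_frol X A)"
  unfolding quotient_frol_def by (rule frolicher_gen_by_curves) (auto simp: curve_in_carrier)

lemma smooth_map_collapse: "frolicher X \<Longrightarrow> smooth_map X (quotient_frol X A) (collapse A)"
  by (rule smooth_map_by_curves) (auto simp: quotient_fun o_assoc)

lemma quotient_lift:
  assumes X: "frolicher X" and g: "smooth_map X W g" and gA: "\<forall>a\<in>A. g a = w0"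
  shows "\<exists>f. smooth_map (quotient_frol X A) W f \<and> f A = w0 \<and> (\<forall>x\<in>fcar X. f (collapse A x) = g x)"
proof -
  define f where "f S = (if S = A then w0 else g (SOME x. x \<in> S))" for S
  have f_collapse: "f (collapse A x) = g x" for x
  proof (cases "x \<in> A")
    case False
    then have "{x} \<noteq> A" by auto
    then show ?thesis using False by (simp add: f_def collapse_def)
  qed (use gA in \<open>simp add: f_def collapse_def\<close>)
  have "smooth_map (quotient_frol X A) W f"
    unfolding smooth_map_def quotient_fun
  proof (intro conjI ballI)
    fix S assume "S \<in> fcar (quotient_frol X A)"
    then show "f S \<in> fcar W" using f_collapse smooth_map_car[OF g] by auto
  next
    fix h x assume h: "h \<in> ffun W" and x: "x \<in> fcurv X"
    have "h \<circ> f \<circ> (collapse A \<circ> x) = h \<circ> g \<circ> x" using f_collapse by (simp add: fun_eq_iff)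
    then show "Cinf (h \<circ> f \<circ> (collapse A \<circ> x))" using smooth_map_curve[OF X g h x] by simp
  qed
  then show ?thesis using f_collapse by (intro exI[of _ f]) (simp add: f_def)
qed

section \<open>Pointed homotopy classes\<close>

lemma equivclp_map:
  assumes "equivclp r a b" "\<And>x y. r x y \<Longrightarrow> s (F x) (F y)"
  shows "equivclp s (F a) (F b)"
  using assms(1)
proof (induction rule: equivclp_induct)
  case (step y z)
  then have "s (F y) (F z) \<or> s (F z) (F y)" using assms(2) by blast
  then show ?case using step(3) equivclp_into_equivclp by metis
qed simp

lemma pmaps_smooth: "f \<in> pmaps X x0 W w0 \<Longrightarrow> smooth_map X W f"
  and pmaps_base: "f \<in> pmaps X x0 W w0 \<Longrightarrow> f x0 = w0"
  by (simp_all add: pmaps_def)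

lemma htpy_rel_of_phomotopic:
  "f \<in> pmaps X x0 W w0 \<Longrightarrow> g \<in> pmaps X x0 W w0 \<Longrightarrow> phomotopic X x0 W w0 f g
   \<Longrightarrow> htpy_rel X x0 W w0 f g"
  unfolding htpy_rel_def by (rule r_into_equivclp) simp

lemma htpy_rel_trans:
  "htpy_rel X x0 W w0 f g \<Longrightarrow> htpy_rel X x0 W w0 g k \<Longrightarrow> htpy_rel X x0 W w0 f k"
  unfolding htpy_rel_def by (rule equivclp_trans)

lemma htpy_rel_sym: "htpy_rel X x0 W w0 f g \<Longrightarrow> htpy_rel X x0 W w0 g f"
  unfolding htpy_rel_def by (rule equivclp_sym)

lemma hcls_eq: "htpy_rel X x0 W w0 f g \<Longrightarrow> hcls X x0 W w0 f = hcls X x0 W w0 g"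
  unfolding hcls_def by (auto intro: htpy_rel_trans htpy_rel_sym)

lemma hcls_self: "f \<in> pmaps X x0 W w0 \<Longrightarrow> f \<in> hcls X x0 W w0 f"
  unfolding hcls_def htpy_rel_def by simp

lemma hcls_rel: "g \<in> hcls X x0 W w0 f \<Longrightarrow> htpy_rel X x0 W w0 f g"
  unfolding hcls_def by simp

lemma some_hcls: "f \<in> pmaps X x0 W w0 \<Longrightarrow> (SOME g. g \<in> hcls X x0 W w0 f) \<in> hcls X x0 W w0 f"
  by (rule someI[of _ f]) (rule hcls_self)

lemma htpy_rel_agree:
  assumes P: "frolicher P" and f: "f \<in> pmaps P x0 W w0" and g: "g \<in> pmaps P x0 W w0"
    and eq: "\<And>x. x \<in> fcar P \<Longrightarrow> f x = g x"
  shows "htpy_rel P x0 W w0 f g"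
proof (rule htpy_rel_of_phomotopic[OF f g])
  have "smooth_map (prod_frol unitI P) W (f \<circ> snd)"
    by (rule smooth_map_comp[OF smooth_map_snd[OF frolicher_unitI P] pmaps_smooth[OF f]])
  then show "phomotopic P x0 W w0 f g"
    unfolding phomotopic_def using eq pmaps_base[OF f] by (intro exI[of _ "f \<circ> snd"]) auto
qed

lemma phomotopic_sym:
  assumes P: "frolicher P" and "phomotopic P x0 W w0 f g"
  shows "phomotopic P x0 W w0 g f"
proof -
  obtain H where H: "smooth_map (prod_frol unitI P) W H"
      "\<forall>x\<in>fcar P. H (0, x) = f x \<and> H (1, x) = g x" "\<forall>t\<in>{0..1}. H (t, x0) = w0"
    using assms(2) unfolding phomotopic_def by blast
  let ?rev = "\<lambda>p. ((\<lambda>t. 1 - t) (fst p), id (snd p))"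
  have "smooth_map (prod_frol unitI P) W (H \<circ> ?rev)"
    by (intro smooth_map_comp[OF _ H(1)] smooth_map_prod frolicher_unitI P smooth_map_reverse
          smooth_map_id)
  then show ?thesis
    unfolding phomotopic_def using H(2,3) by (intro exI[of _ "H \<circ> ?rev"]) auto
qed

lemma pmaps_precomp:
  "smooth_map X Y g \<Longrightarrow> g x0 = y0 \<Longrightarrow> f \<in> pmaps Y y0 W w0 \<Longrightarrow> f \<circ> g \<in> pmaps X x0 W w0"
  unfolding pmaps_def by (auto intro: smooth_map_comp)

lemma phomotopic_precomp:
  assumes X: "frolicher X" and Y: "frolicher Y" and g: "smooth_map X Y g" "g x0 = y0"
    and "phomotopic Y y0 W w0 f f'"
  shows "phomotopic X x0 W w0 (f \<circ> g) (f' \<circ> g)"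
proof -
  obtain H where H: "smooth_map (prod_frol unitI Y) W H"
      "\<forall>y\<in>fcar Y. H (0, y) = f y \<and> H (1, y) = f' y" "\<forall>t\<in>{0..1}. H (t, y0) = w0"
    using assms(5) unfolding phomotopic_def by blast
  let ?G = "\<lambda>p. (id (fst p), g (snd p))"
  have "smooth_map (prod_frol unitI X) W (H \<circ> ?G)"
    by (intro smooth_map_comp[OF _ H(1)] smooth_map_prod frolicher_unitI X Y smooth_map_id g(1))
  moreover have "\<forall>x\<in>fcar X. (H \<circ> ?G) (0, x) = (f \<circ> g) x \<and> (H \<circ> ?G) (1, x) = (f' \<circ> g) x"
    using H(2) smooth_map_car[OF g(1)] by simp
  ultimately show ?thesis
    unfolding phomotopic_def using H(3) g(2) by (intro exI[of _ "H \<circ> ?G"]) simp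
qed

lemma htpy_rel_precomp:
  assumes X: "frolicher X" and Y: "frolicher Y" and g: "smooth_map X Y g" "g x0 = y0"
    and r: "htpy_rel Y y0 W w0 f f'"
  shows "htpy_rel X x0 W w0 (f \<circ> g) (f' \<circ> g)"
  using r unfolding htpy_rel_def
proof (rule equivclp_map[where F="\<lambda>f. f \<circ> g"])
  fix f1 f2 assume "f1 \<in> pmaps Y y0 W w0 \<and> f2 \<in> pmaps Y y0 W w0 \<and> phomotopic Y y0 W w0 f1 f2"
  then show "f1 \<circ> g \<in> pmaps X x0 W w0 \<and> f2 \<circ> g \<in> pmaps X x0 W w0 \<and>
             phomotopic X x0 W w0 (f1 \<circ> g) (f2 \<circ> g)"
    by (intro conjI pmaps_precomp[OF g] phomotopic_precomp[OF X Y g]) simp_all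
qed

lemma pullback_hcls:
  assumes X: "frolicher X" and Y: "frolicher Y" and g: "smooth_map X Y g" "g x0 = y0"
    and f: "f \<in> pmaps Y y0 W w0"
  shows "pullback X x0 W w0 g (hcls Y y0 W w0 f) = hcls X x0 W w0 (f \<circ> g)"
proof -
  let ?f' = "SOME f'. f' \<in> hcls Y y0 W w0 f"
  have "htpy_rel Y y0 W w0 f ?f'" by (rule hcls_rel[OF some_hcls[OF f]])
  then have "htpy_rel X x0 W w0 (f \<circ> g) (?f' \<circ> g)" by (rule htpy_rel_precomp[OF X Y g])
  then show ?thesis unfolding pullback_def by (rule hcls_eq[symmetric])
qed

section \<open>Homotopy extension for SNDR pairs\<close>

lemma scaled_time_curve:
  assumes X: "frolicher X" and \<rho>: "\<rho> \<in> ffun X" "\<forall>x\<in>fcar X. \<rho> x \<in> {0..1}"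
    and c: "c \<in> fcurv (prod_frol unitI X)"
  shows "(\<lambda>s. fst (c s) * \<rho> (snd (c s))) \<in> fcurv unitI"
proof -
  have t: "fst \<circ> c \<in> fcurv unitI" and x: "snd \<circ> c \<in> fcurv X"
    using c by (simp_all add: prod_curv frolicher_unitI X)
  have "Cinf (\<lambda>s. fst (c s) * \<rho> (snd (c s)))"
    using Cinf_mult[OF t[unfolded unitI_curv, THEN conjunct2] frolicher_funD[OF X \<rho>(1) x]]
    by (simp add: comp_def)
  moreover have "\<forall>s. fst (c s) * \<rho> (snd (c s)) \<in> {0..1}"
    using t[unfolded unitI_curv] \<rho>(2) curve_in_carrier[OF X x] by (auto simp: mult_le_one)
  ultimately show ?thesis by (simp add: unitI_curv)
qed

lemma smooth_map_rescale:
  assumes X: "frolicher X" and \<rho>: "\<rho> \<in> ffun X" "\<forall>x\<in>fcar X. \<rho> x \<in> {0..1}"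
  shows "smooth_map (prod_frol unitI X) (prod_frol boldI X) (\<lambda>p. (fst p * \<rho> (snd p), snd p))"
proof (rule smooth_map_by_curves[OF frolicher_prod])
  fix p assume "p \<in> fcar (prod_frol unitI X)"
  then show "(fst p * \<rho> (snd p), snd p) \<in> fcar (prod_frol boldI X)"
    using \<rho>(2) by (auto simp: mem_Times_iff mult_le_one)
next
  fix h c assume h: "h \<in> ffun (prod_frol boldI X)" and c: "c \<in> fcurv (prod_frol unitI X)"
  have "snd \<circ> c \<in> fcurv X" using c by (simp add: prod_curv frolicher_unitI X)
  from pair_curve[OF frolicher_boldI X unitI_curve_boldI[OF scaled_time_curve[OF X \<rho> c]] this]
  have "(\<lambda>p. (fst p * \<rho> (snd p), snd p)) \<circ> c \<in> fcurv (prod_frol boldI X)"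
    by (simp add: comp_def)
  from frolicher_funD[OF frolicher_prod h this]
  show "Cinf (h \<circ> (\<lambda>p. (fst p * \<rho> (snd p), snd p)) \<circ> c)" by (simp add: o_assoc)
qed

locale sndr_pair =
  fixes X :: "'a frol" and A :: "'a set" and x0 :: 'a
    and u :: "'a \<Rightarrow> real" and H :: "real \<times> 'a \<Rightarrow> 'a"
  assumes X: "frolicher X" and A_sub: "A \<subseteq> fcar X" and x0_in_A: "x0 \<in> A"
    and u_smooth: "smooth_map X boldI u" and u_zero: "{x\<in>fcar X. u x = 0} = A"
    and H_smooth: "smooth_map (prod_frol boldI X) X H"
    and H_0: "\<forall>x\<in>fcar X. H (0, x) = x" and H_A: "\<forall>t\<in>{0..1}. \<forall>a\<in>A. H (t, a) = a"
    and H_1: "\<forall>x\<in>fcar X. u x < 1 \<longrightarrow> H (1, x) \<in> A"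
begin

lemma u_A: "a \<in> A \<Longrightarrow> u a = 0"
  using u_zero by blast

lemma step_u_fun:
  assumes "1/8 \<le> a" "a < b" "b \<le> 7/8" "Cinf \<phi>"
  shows "(\<lambda>x. \<phi> (step a b (u x))) \<in> ffun X"
  using u_smooth Cinf_step_boldI_fun[OF assms] unfolding smooth_map_def by (auto simp: comp_def)

lemma u_curve_below:
  assumes "1/8 \<le> a" "a < b" "b \<le> 7/8" and x: "x \<in> fcurv X" and "u (x s0) \<le> a"
  shows "\<exists>\<delta>>0. \<forall>s. \<bar>s - s0\<bar> < \<delta> \<longrightarrow> u (x s) < b"
proof -
  have "Cinf (\<lambda>s. 1 - step a b (u (x s)))"
    using frolicher_funD[OF X step_u_fun[OF assms(1-3) Cinf_diff[OF Cinf_const Cinf_id]] x]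
    by (simp add: comp_def)
  moreover have "1 - step a b (u (x s0)) > 0" using step_low[OF assms(2)] assms(5) by simp
  ultimately obtain \<delta> where "\<delta> > 0" "\<forall>s. \<bar>s - s0\<bar> < \<delta> \<longrightarrow> 1 - step a b (u (x s)) > 0"
    using Cinf_pos_nbhd by blast
  then show ?thesis using step_lt1[OF assms(2)] by auto
qed

lemma u_curve_above:
  assumes "1/8 \<le> a" "a < b" "b \<le> 7/8" and x: "x \<in> fcurv X" and "u (x s0) \<ge> b"
  shows "\<exists>\<delta>>0. \<forall>s. \<bar>s - s0\<bar> < \<delta> \<longrightarrow> u (x s) > a"
proof -
  have "Cinf (\<lambda>s. step a b (u (x s)))"
    using frolicher_funD[OF X step_u_fun[OF assms(1-3) Cinf_id] x] by (simp add: comp_def)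
  moreover have "step a b (u (x s0)) > 0" using step_high[OF assms(2)] assms(5) by simp
  ultimately obtain \<delta> where "\<delta> > 0" "\<forall>s. \<bar>s - s0\<bar> < \<delta> \<longrightarrow> step a b (u (x s)) > 0"
    using Cinf_pos_nbhd by blast
  then show ?thesis using step_pos[OF assms(2)] by auto
qed

lemma retraction_curve:
  assumes x: "x \<in> fcurv X" and below: "\<forall>s. u (x s) < 1"
  shows "(\<lambda>s. H (1, x s)) \<in> fcurv (frol_subspace X A)"
proof -
  have "(\<lambda>s. (1::real, x s)) \<in> fcurv (prod_frol boldI X)"
    by (rule pair_curve[OF frolicher_boldI X const_curve[OF frolicher_boldI] x]) simp
  from smooth_map_curve_image[OF frolicher_prod X H_smooth this]
  have "(\<lambda>s. H (1, x s)) \<in> fcurv X" by (simp add: comp_def)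
  moreover have "H (1, x s) \<in> A" for s
    using H_1 curve_in_carrier[OF X x] below by blast
  ultimately show ?thesis by (simp add: subspace_curv[OF X A_sub])
qed

text \<open>Stage one: deform \<open>g\<close> along \<open>H\<close>, with time cut off far from \<open>A\<close>, so that near \<open>A\<close>
  it factors through the retraction \<open>x \<mapsto> H(1,x)\<close>.\<close>
definition cut_far :: "'a \<Rightarrow> real" where
  "cut_far x = 1 - step (3/4) (7/8) (u x)"

lemma cut_far_fun: "cut_far \<in> ffun X"
  unfolding cut_far_def[abs_def] by (rule step_u_fun) (auto intro: Cinf_diff Cinf_const Cinf_id)

lemma cut_far_range: "cut_far x \<in> {0..1}"
  using step_range[of "3/4" "7/8" "u x"] by (simp add: cut_far_def)

lemma cut_far_one: "u x \<le> 3/4 \<Longrightarrow> cut_far x = 1"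
  using step_low[of "3/4" "7/8" "u x"] by (simp add: cut_far_def)

lemma deform_to_retraction:
  assumes g: "g \<in> pmaps X x0 W w0"
  shows "\<exists>g1. g1 \<in> pmaps X x0 W w0 \<and> htpy_rel X x0 W w0 g g1 \<and> (\<forall>a\<in>A. g1 a = g a) \<and>
           (\<forall>x\<in>fcar X. u x < 3/4 \<longrightarrow> g1 x = g1 (H (1, x)))"
proof -
  define L where "L = g \<circ> H \<circ> (\<lambda>p. (fst p * cut_far (snd p), snd p))"
  define g1 where "g1 = L \<circ> (\<lambda>x. (1, x))"
  have "smooth_map (prod_frol unitI X) (prod_frol boldI X) (\<lambda>p. (fst p * cut_far (snd p), snd p))"
    by (rule smooth_map_rescale[OF X cut_far_fun]) (use cut_far_range in blast)
  then have L: "smooth_map (prod_frol unitI X) W L"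
    unfolding L_def by (rule smooth_map_comp[OF _ smooth_map_comp[OF H_smooth pmaps_smooth[OF g]]])
  have g1_eq: "g1 x = g (H (cut_far x, x))" for x by (simp add: g1_def L_def)
  have g1_A: "g1 a = g a" if "a \<in> A" for a
    using that H_A cut_far_range by (simp add: g1_eq)
  have "smooth_map X W g1"
    unfolding g1_def by (intro smooth_map_comp[OF smooth_map_slice L] frolicher_unitI X) simp
  then have g1: "g1 \<in> pmaps X x0 W w0"
    using g1_A[OF x0_in_A] pmaps_base[OF g] by (simp add: pmaps_def)
  have "phomotopic X x0 W w0 g g1"
    unfolding phomotopic_def
  proof (intro exI[of _ L] conjI ballI)
    fix x assume "x \<in> fcar X"
    then show "L (0, x) = g x" using H_0 by (simp add: L_def)
    show "L (1, x) = g1 x" by (simp add: g1_def)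
  next
    fix t :: real assume "t \<in> {0..1}"
    then have "t * cut_far x0 \<in> {0..1}" using cut_far_range[of x0] by (auto simp: mult_le_one)
    then show "L (t, x0) = w0" using H_A x0_in_A pmaps_base[OF g] by (simp add: L_def)
  qed (rule L)
  then have "htpy_rel X x0 W w0 g g1" by (rule htpy_rel_of_phomotopic[OF g g1])
  moreover have "g1 x = g1 (H (1, x))" if "x \<in> fcar X" "u x < 3/4" for x
  proof -
    have "H (1, x) \<in> A" using H_1 that by simp
    then have "g1 (H (1, x)) = g (H (1, x))" by (rule g1_A)
    also have "\<dots> = g1 x" using cut_far_one[of x] that by (simp add: g1_eq)
    finally show ?thesis by simp
  qed
  ultimately show ?thesis using g1 g1_A by blast
qed

text \<open>Stage two: a homotopy \<open>K\<close> on \<open>A\<close> is transported along the retraction and switched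
  off by a cut-off in \<open>u\<close>, which equals \<open>1\<close> near \<open>A\<close> and \<open>0\<close> where \<open>u \<ge> 1/2\<close>.\<close>
definition cut_near :: "'a \<Rightarrow> real" where
  "cut_near x = 1 - step (1/4) (1/2) (u x)"

lemma cut_near_fun: "cut_near \<in> ffun X"
  unfolding cut_near_def[abs_def] by (rule step_u_fun) (auto intro: Cinf_diff Cinf_const Cinf_id)

lemma cut_near_range: "cut_near x \<in> {0..1}"
  using step_range[of "1/4" "1/2" "u x"] by (simp add: cut_near_def)

lemma cut_near_one: "u x \<le> 1/4 \<Longrightarrow> cut_near x = 1"
  using step_low[of "1/4" "1/2" "u x"] by (simp add: cut_near_def)

lemma cut_near_zero: "u x \<ge> 1/2 \<Longrightarrow> cut_near x = 0"
  using step_high[of "1/4" "1/2" "u x"] by (simp add: cut_near_def)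

definition extended_htpy :: "(real \<times> 'a \<Rightarrow> 'b) \<Rightarrow> ('a \<Rightarrow> 'b) \<Rightarrow> real \<times> 'a \<Rightarrow> 'b" where
  "extended_htpy K g1 p =
     (if u (snd p) < 3/4 then K (fst p * cut_near (snd p), H (1, snd p)) else g1 (snd p))"

lemma extended_htpy_A: "a \<in> A \<Longrightarrow> extended_htpy K g1 (t, a) = K (t, a)"
  using u_A[of a] cut_near_one[of a] H_A by (simp add: extended_htpy_def)

lemma extended_htpy_g1:
  assumes K0: "\<forall>a\<in>A. K (0, a) = g1 a"
    and factor: "\<forall>x\<in>fcar X. u x < 3/4 \<longrightarrow> g1 x = g1 (H (1, x))"
    and x: "x \<in> fcar X" and t: "t = 0 \<or> u x \<ge> 1/2"
  shows "extended_htpy K g1 (t, x) = g1 x"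
proof (cases "u x < 3/4")
  case True
  have "t * cut_near x = 0" using t cut_near_zero[of x] by auto
  have "extended_htpy K g1 (t, x) = K (t * cut_near x, H (1, x))"
    using True by (simp add: extended_htpy_def)
  also have "\<dots> = K (0, H (1, x))" by (simp only: \<open>t * cut_near x = 0\<close>)
  also have "\<dots> = g1 (H (1, x))" using K0 H_1 x True by simp
  also have "\<dots> = g1 x" using factor x True by simp
  finally show ?thesis .
qed (simp add: extended_htpy_def)

lemma extended_htpy_curve_near_A:
  assumes K: "smooth_map (prod_frol unitI (frol_subspace X A)) W K" and h: "h \<in> ffun W"
    and c: "c \<in> fcurv (prod_frol unitI X)" and near: "\<forall>s. u (snd (c s)) < 3/4"
  shows "Cinf (h \<circ> extended_htpy K g1 \<circ> c)"
proof -
  have x: "snd \<circ> c \<in> fcurv X" using c by (simp add: prod_curv frolicher_unitI X)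
  have "\<forall>s. u ((snd \<circ> c) s) < 1"
  proof
    fix s
    have "u (snd (c s)) < 3/4" using near by blast
    then show "u ((snd \<circ> c) s) < 1" by simp
  qed
  from retraction_curve[OF x this]
  have "(\<lambda>s. H (1, snd (c s))) \<in> fcurv (frol_subspace X A)" by (simp add: comp_def)
  from pair_curve[OF frolicher_unitI frolicher_subspace
                    scaled_time_curve[OF X cut_near_fun _ c] this]
  have "(\<lambda>s. (fst (c s) * cut_near (snd (c s)), H (1, snd (c s))))
          \<in> fcurv (prod_frol unitI (frol_subspace X A))"
    using cut_near_range by blast
  from smooth_map_curve[OF frolicher_prod K h this]
  show ?thesis using near by (simp add: comp_def extended_htpy_def)
qed

text \<open>Smoothness of the extended homotopy is local along curves: near points where
  \<open>u < 3/4\<close> it is \<open>K\<close> composed with smooth data, near points where \<open>u > 1/2\<close> it is \<open>g1\<close>.\<close>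
lemma extended_htpy_smooth:
  assumes K: "smooth_map (prod_frol unitI (frol_subspace X A)) W K"
    and K0: "\<forall>a\<in>A. K (0, a) = g1 a"
    and factor: "\<forall>x\<in>fcar X. u x < 3/4 \<longrightarrow> g1 x = g1 (H (1, x))"
    and g1: "smooth_map X W g1"
  shows "smooth_map (prod_frol unitI X) W (extended_htpy K g1)"
proof (rule smooth_map_by_curves[OF frolicher_prod])
  fix p assume p: "p \<in> fcar (prod_frol unitI X)"
  show "extended_htpy K g1 p \<in> fcar W"
  proof (cases "u (snd p) < 3/4")
    case True
    then have "(fst p * cut_near (snd p), H (1, snd p)) \<in> fcar (prod_frol unitI (frol_subspace X A))"
      using p H_1 cut_near_range[of "snd p"] by (auto simp: mem_Times_iff mult_le_one)
    then show ?thesis using True smooth_map_car[OF K] by (simp add: extended_htpy_def)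
  next
    case False
    then show ?thesis using p smooth_map_car[OF g1] by (auto simp: extended_htpy_def mem_Times_iff)
  qed
next
  fix h c assume h: "h \<in> ffun W" and c: "c \<in> fcurv (prod_frol unitI X)"
  have x: "snd \<circ> c \<in> fcurv X" using c by (simp add: prod_curv frolicher_unitI X)
  show "Cinf (h \<circ> extended_htpy K g1 \<circ> c)"
  proof (rule Cinf_by_local_reparam)
    fix s0
    consider "u (snd (c s0)) \<le> 5/8" | "u (snd (c s0)) \<ge> 5/8" by linarith
    then show "\<exists>\<delta>>0. \<forall>\<sigma>. Cinf \<sigma> \<longrightarrow> (\<forall>s. \<bar>\<sigma> s - s0\<bar> < \<delta>) \<longrightarrow> Cinf (h \<circ> extended_htpy K g1 \<circ> c \<circ> \<sigma>)"
    proof cases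
      case 1
      then obtain \<delta> where \<delta>: "\<delta> > 0" "\<forall>s. \<bar>s - s0\<bar> < \<delta> \<longrightarrow> u (snd (c s)) < 3/4"
        using u_curve_below[of "5/8" "3/4", OF _ _ _ x] by auto
      have "Cinf (h \<circ> extended_htpy K g1 \<circ> (c \<circ> \<sigma>))" if "Cinf \<sigma>" "\<forall>s. \<bar>\<sigma> s - s0\<bar> < \<delta>" for \<sigma>
        by (rule extended_htpy_curve_near_A[OF K h curve_reparam[OF frolicher_prod c that(1)]])
           (use \<delta> that in simp)
      then show ?thesis using \<delta>(1) by (auto simp: o_assoc)
    next
      case 2
      then obtain \<delta> where \<delta>: "\<delta> > 0" "\<forall>s. \<bar>s - s0\<bar> < \<delta> \<longrightarrow> u (snd (c s)) > 1/2"
        using u_curve_above[of "1/2" "5/8", OF _ _ _ x] by auto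
      have "Cinf (h \<circ> extended_htpy K g1 \<circ> c \<circ> \<sigma>)" if "Cinf \<sigma>" "\<forall>s. \<bar>\<sigma> s - s0\<bar> < \<delta>" for \<sigma>
      proof -
        have "extended_htpy K g1 (c (\<sigma> s)) = g1 (snd (c (\<sigma> s)))" for s
        proof -
          have "snd (c (\<sigma> s)) \<in> fcar X" using curve_in_carrier[OF X x] by simp
          moreover have "u (snd (c (\<sigma> s))) > 1/2" using \<delta>(2) that(2) by blast
          ultimately have "extended_htpy K g1 (fst (c (\<sigma> s)), snd (c (\<sigma> s))) = g1 (snd (c (\<sigma> s)))"
            by (intro extended_htpy_g1[OF K0 factor]) auto
          then show ?thesis by simp
        qed
        then have "h \<circ> extended_htpy K g1 \<circ> c \<circ> \<sigma> = h \<circ> g1 \<circ> (snd \<circ> c \<circ> \<sigma>)"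
          by (simp add: fun_eq_iff)
        then show ?thesis using smooth_map_curve[OF X g1 h curve_reparam[OF X x that(1)]] by simp
      qed
      then show ?thesis using \<delta>(1) by blast
    qed
  qed
qed

lemma extend_homotopy:
  assumes g1: "g1 \<in> pmaps X x0 W w0"
    and factor: "\<forall>x\<in>fcar X. u x < 3/4 \<longrightarrow> g1 x = g1 (H (1, x))"
    and K: "smooth_map (prod_frol unitI (frol_subspace X A)) W K"
    and K0: "\<forall>a\<in>A. K (0, a) = g1 a" and K_base: "\<forall>t\<in>{0..1}. K (t, x0) = w0"
  shows "\<exists>g2. g2 \<in> pmaps X x0 W w0 \<and> htpy_rel X x0 W w0 g1 g2 \<and> (\<forall>a\<in>A. g2 a = K (1, a))"
proof -
  let ?M = "extended_htpy K g1"
  have M: "smooth_map (prod_frol unitI X) W ?M"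
    by (rule extended_htpy_smooth[OF K K0 factor pmaps_smooth[OF g1]])
  define g2 where "g2 = ?M \<circ> (\<lambda>x. (1, x))"
  have g2_A: "g2 a = K (1, a)" if "a \<in> A" for a
    using extended_htpy_A[OF that] by (simp add: g2_def)
  have "smooth_map X W g2"
    unfolding g2_def by (intro smooth_map_comp[OF smooth_map_slice M] frolicher_unitI X) simp
  then have g2: "g2 \<in> pmaps X x0 W w0"
    using g2_A[OF x0_in_A] K_base by (simp add: pmaps_def)
  have "phomotopic X x0 W w0 g1 g2"
    unfolding phomotopic_def
  proof (intro exI[of _ ?M] conjI ballI)
    fix x assume "x \<in> fcar X"
    then show "?M (0, x) = g1 x" by (rule extended_htpy_g1[OF K0 factor]) simp
    show "?M (1, x) = g2 x" by (simp add: g2_def)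
  next
    fix t :: real assume "t \<in> {0..1}"
    then have "K (t, x0) = w0" using K_base by blast
    then show "?M (t, x0) = w0" by (rule trans[OF extended_htpy_A[OF x0_in_A]])
  qed (rule M)
  then have "htpy_rel X x0 W w0 g1 g2" by (rule htpy_rel_of_phomotopic[OF g1 g2])
  then show ?thesis using g2 g2_A by blast
qed

lemma homotopy_extension:
  assumes g: "g \<in> pmaps X x0 W w0"
    and K: "smooth_map (prod_frol unitI (frol_subspace X A)) W K"
    and K0: "\<forall>a\<in>A. K (0, a) = g a" and K_base: "\<forall>t\<in>{0..1}. K (t, x0) = w0"
  shows "\<exists>g2. g2 \<in> pmaps X x0 W w0 \<and> htpy_rel X x0 W w0 g g2 \<and> (\<forall>a\<in>A. g2 a = K (1, a))"
proof -
  obtain g1 where g1: "g1 \<in> pmaps X x0 W w0" "htpy_rel X x0 W w0 g g1" "\<forall>a\<in>A. g1 a = g a"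
      "\<forall>x\<in>fcar X. u x < 3/4 \<longrightarrow> g1 x = g1 (H (1, x))"
    using deform_to_retraction[OF g] by blast
  have "\<forall>a\<in>A. K (0, a) = g1 a" using K0 g1(3) by simp
  then obtain g2 where "g2 \<in> pmaps X x0 W w0" "htpy_rel X x0 W w0 g1 g2" "\<forall>a\<in>A. g2 a = K (1, a)"
    using extend_homotopy[OF g1(1,4) K _ K_base] by blast
  then show ?thesis using htpy_rel_trans[OF g1(2)] by blast
qed

lemma homotopic_to_constant_on_A:
  assumes k: "htpy_rel (frol_subspace X A) x0 W w0 k (\<lambda>_. w0)"
    and g: "g \<in> pmaps X x0 W w0" and gk: "\<forall>a\<in>A. g a = k a"
  shows "\<exists>g'. g' \<in> pmaps X x0 W w0 \<and> htpy_rel X x0 W w0 g g' \<and> (\<forall>a\<in>A. g' a = w0)"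
  using k[unfolded htpy_rel_def] g gk
proof (induction arbitrary: g rule: converse_equivclp_induct)
  case base
  then show ?case unfolding htpy_rel_def by (intro exI[of _ g]) simp
next
  case (step y z)
  have "phomotopic (frol_subspace X A) x0 W w0 y z"
    using step(1)
  proof (elim disjE conjE)
    assume "phomotopic (frol_subspace X A) x0 W w0 z y"
    then show ?thesis by (rule phomotopic_sym[OF frolicher_subspace])
  qed
  then obtain K where K: "smooth_map (prod_frol unitI (frol_subspace X A)) W K"
      "\<forall>a\<in>A. K (0, a) = y a \<and> K (1, a) = z a" "\<forall>t\<in>{0..1}. K (t, x0) = w0"
    unfolding phomotopic_def by auto
  obtain g2 where g2: "g2 \<in> pmaps X x0 W w0" "htpy_rel X x0 W w0 g g2" "\<forall>a\<in>A. g2 a = z a"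
    using homotopy_extension[OF step.prems(1) K(1) _ K(3)] K(2) step.prems(2) by auto
  then obtain g' where "g' \<in> pmaps X x0 W w0" "htpy_rel X x0 W w0 g2 g'" "\<forall>a\<in>A. g' a = w0"
    using step.IH by blast
  then show ?case using htpy_rel_trans[OF g2(2)] by blast
qed

end

lemma sndr_pairI:
  assumes "SNDR X A" "frolicher X" "A \<subseteq> fcar X" "x0 \<in> A"
  obtains u H where "sndr_pair X A x0 u H"
  using assms unfolding SNDR_def sndr_pair_def by blast

section \<open>Right exactness\<close>

text \<open>\<open>im p\<^sup>* \<subseteq> ker i\<^sup>*\<close>: maps pulled back from \<open>X/A\<close> are constant on \<open>A\<close>.\<close>
lemma pullback_collapse_in_kernel:
  assumes X: "frolicher X" and A: "A \<subseteq> fcar X" "x0 \<in> A" and w0: "w0 \<in> fcar W"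
    and c: "c \<in> pullback X x0 W w0 (collapse A) ` htpy_set (quotient_frol X A) A W w0"
  shows "c \<in> htpy_set X x0 W w0 \<and>
         pullback (frol_subspace X A) x0 W w0 id c = hcls (frol_subspace X A) x0 W w0 (\<lambda>_. w0)"
proof -
  let ?Q = "quotient_frol X A" and ?S = "frol_subspace X A"
  obtain f where f: "f \<in> pmaps ?Q A W w0"
    and c_eq: "c = pullback X x0 W w0 (collapse A) (hcls ?Q A W w0 f)"
    using c unfolding htpy_set_def by blast
  have p: "smooth_map X ?Q (collapse A)" "collapse A x0 = A"
    using smooth_map_collapse[OF X] A(2) by (simp_all add: collapse_def)
  have i: "smooth_map ?S X id" "id x0 = x0" using smooth_map_inclusion[OF X A(1)] by simp_all
  have fp: "f \<circ> collapse A \<in> pmaps X x0 W w0" by (rule pmaps_precomp[OF p f])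
  have c_f: "c = hcls X x0 W w0 (f \<circ> collapse A)"
    unfolding c_eq by (rule pullback_hcls[OF X frolicher_quotient[OF X] p f])
  have "pullback ?S x0 W w0 id c = hcls ?S x0 W w0 (f \<circ> collapse A \<circ> id)"
    unfolding c_f by (rule pullback_hcls[OF frolicher_subspace X i fp])
  also have "\<dots> = hcls ?S x0 W w0 (\<lambda>_. w0)"
  proof (rule hcls_eq, rule htpy_rel_agree[OF frolicher_subspace])
    show "f \<circ> collapse A \<circ> id \<in> pmaps ?S x0 W w0" by (rule pmaps_precomp[OF i fp])
    show "(\<lambda>_. w0) \<in> pmaps ?S x0 W w0"
      by (simp add: pmaps_def smooth_map_const[OF frolicher_subspace w0])
    show "(f \<circ> collapse A \<circ> id) a = w0" if "a \<in> fcar ?S" for a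
      using that pmaps_base[OF f] by (simp add: collapse_def)
  qed
  finally show ?thesis using fp c_f unfolding htpy_set_def by blast
qed

text \<open>\<open>ker i\<^sup>* \<subseteq> im p\<^sup>*\<close>: a class whose restriction to \<open>A\<close> is trivial contains a map
  constant on \<open>A\<close>, which descends to \<open>X/A\<close>.\<close>
lemma kernel_in_pullback_collapse:
  assumes X: "frolicher X" and A: "A \<subseteq> fcar X" "x0 \<in> A" and S: "SNDR X A"
    and w0: "w0 \<in> fcar W"
    and c: "c \<in> htpy_set X x0 W w0"
    and c_ker: "pullback (frol_subspace X A) x0 W w0 id c = hcls (frol_subspace X A) x0 W w0 (\<lambda>_. w0)"
  shows "c \<in> pullback X x0 W w0 (collapse A) ` htpy_set (quotient_frol X A) A W w0"
proof -
  let ?Q = "quotient_frol X A" and ?S = "frol_subspace X A"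
  obtain u H where sndr: "sndr_pair X A x0 u H" using sndr_pairI[OF S X A] .
  obtain g where g: "g \<in> pmaps X x0 W w0" and c_g: "c = hcls X x0 W w0 g"
    using c unfolding htpy_set_def by blast
  have i: "smooth_map ?S X id" "id x0 = x0" using smooth_map_inclusion[OF X A(1)] by simp_all
  have c0: "(\<lambda>_. w0) \<in> pmaps ?S x0 W w0"
    by (simp add: pmaps_def smooth_map_const[OF frolicher_subspace w0])
  have "hcls ?S x0 W w0 (g \<circ> id) = hcls ?S x0 W w0 (\<lambda>_. w0)"
    using c_ker unfolding c_g pullback_hcls[OF frolicher_subspace X i g] .
  then have "(\<lambda>_. w0) \<in> hcls ?S x0 W w0 g" using hcls_self[OF c0] by simp
  then have "htpy_rel ?S x0 W w0 g (\<lambda>_. w0)" by (rule hcls_rel)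
  then obtain g' where g': "g' \<in> pmaps X x0 W w0" "htpy_rel X x0 W w0 g g'" "\<forall>a\<in>A. g' a = w0"
    using sndr_pair.homotopic_to_constant_on_A[OF sndr _ g] by blast
  obtain f where f: "smooth_map ?Q W f" "f A = w0" "\<forall>x\<in>fcar X. f (collapse A x) = g' x"
    using quotient_lift[OF X pmaps_smooth[OF g'(1)] g'(3)] by blast
  have fp: "f \<in> pmaps ?Q A W w0" using f by (simp add: pmaps_def)
  have p: "smooth_map X ?Q (collapse A)" "collapse A x0 = A"
    using smooth_map_collapse[OF X] A(2) by (simp_all add: collapse_def)
  have "htpy_rel X x0 W w0 g' (f \<circ> collapse A)"
    using f(3) by (intro htpy_rel_agree[OF X g'(1) pmaps_precomp[OF p fp]]) simp
  then have "c = hcls X x0 W w0 (f \<circ> collapse A)"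
    unfolding c_g by (intro hcls_eq htpy_rel_trans[OF g'(2)])
  also have "\<dots> = pullback X x0 W w0 (collapse A) (hcls ?Q A W w0 f)"
    by (rule pullback_hcls[OF X frolicher_quotient[OF X] p fp, symmetric])
  finally show ?thesis using fp unfolding htpy_set_def by blast
qed

theorem lemma6:
  fixes X :: "'a frol" and x0 :: 'a and A :: "'a set"
    and W :: "'b frol" and w0 :: 'b
  assumes "frolicher X" and "x0 \<in> fcar X"
    and "frolicher W" and "w0 \<in> fcar W"
    and "A \<subseteq> fcar X" and "x0 \<in> A"
    and "SNDR X A"
  shows "pullback X x0 W w0 (collapse A) ` htpy_set (quotient_frol X A) A W w0
         = {c \<in> htpy_set X x0 W w0.
              pullback (frol_subspace X A) x0 W w0 id c = hcls (frol_subspace X A) x0 W w0 (\<lambda>_. w0)}"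
  using pullback_collapse_in_kernel[OF assms(1,5,6,4)]
    kernel_in_pullback_collapse[OF assms(1,5,6,7,4)]
  by blast

end
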